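(* For every $\delta\in\mathcal{D}^{LSL}$, Gini's gamma, Spearman's footrule and Blomqvist's beta of $S_\delta$ are given by $$\gamma(S_\delta)=4\int_{[0,\frac12]}\Big(\delta(x)+x\tfrac{\delta(1-x)}{1-x}\Big)\,d\lambda(x)+4\int_{[\frac12,1]}\tfrac{\delta(x)}{x}\,d\lambda(x)-2,$$ $$\phi(S_\delta)=6\int_{[0,1]}\delta(x)\,d\lambda(x)-2,\qquad \beta(S_\delta)=4\,\delta(\tfrac12)-1,$$ and they fulfill $\gamma(S_\delta),\phi(S_\delta),\beta(S_\delta)\in[0,1]$.
   Context: $\lambda$ is Lebesgue measure on $[0,1]$. Let $\mathcal{D}$ be the set of all functions $\delta:[0,1]\to[0,1]$ with $\delta(u)\le u$, $\delta(1)=1$, $\delta$ non-decreasing and 2-Lipschitz. Let $\mathcal{D}^{LSL}$ be the set of $\delta\in\mathcal{D}$ such that $x\mapsto\delta(x)/x$ is non-decreasing and $x\mapsto\delta(x)/x^2$ is non-increasing on $(0,1]$. For $\delta\in\mathcal{D}^{LSL}$, $S_\delta(x,y)=y\,\delta(x)/x$ if $y\le x$ and $x\,\delta(y)/y$ otherwise (convention $0/0:=0$); it is a copula. For a copula $C$: Gini's gamma $\gamma(C)=4\int_{[0,1]}C(x,x)\,d\lambda(x)+4\int_{[0,1]}C(x,1-x)\,d\lambda(x)-2$, Spearman's footrule $\phi(C)=6\int_{[0,1]}C(x,x)\,d\lambda(x)-2$, Blomqvist's beta $\beta(C)=4C(\tfrac12,\tfrac12)-1$. *)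

theory Defs
  imports "HOL-Analysis.Analysis"
begin

definition diag_class :: "(real \<Rightarrow> real) set" where
  "diag_class = {\<delta>. (\<forall>u\<in>{0..1}. \<delta> u \<in> {0..1} \<and> \<delta> u \<le> u)
      \<and> \<delta> 1 = 1 \<and> mono_on {0..1} \<delta> \<and> 2-lipschitz_on {0..1} \<delta>}"

definition diag_class_LSL :: "(real \<Rightarrow> real) set" where
  "diag_class_LSL = {\<delta> \<in> diag_class.
      mono_on {0<..1} (\<lambda>x. \<delta> x / x) \<and> antimono_on {0<..1} (\<lambda>x. \<delta> x / x\<^sup>2)}"

text \<open>S_delta; note that in Isabelle/HOL x / 0 = 0, matching the convention 0/0 := 0.\<close>
definition S_delta :: "(real \<Rightarrow> real) \<Rightarrow> real \<Rightarrow> real \<Rightarrow> real" where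
  "S_delta \<delta> x y = (if y \<le> x then y * \<delta> x / x else x * \<delta> y / y)"

definition gini_gamma :: "(real \<Rightarrow> real \<Rightarrow> real) \<Rightarrow> real" where
  "gini_gamma C = 4 * integral\<^sup>L (lebesgue_on {0..1}) (\<lambda>x. C x x)
     + 4 * integral\<^sup>L (lebesgue_on {0..1}) (\<lambda>x. C x (1 - x)) - 2"

definition spearman_footrule :: "(real \<Rightarrow> real \<Rightarrow> real) \<Rightarrow> real" where
  "spearman_footrule C = 6 * integral\<^sup>L (lebesgue_on {0..1}) (\<lambda>x. C x x) - 2"

definition blomqvist_beta :: "(real \<Rightarrow> real \<Rightarrow> real) \<Rightarrow> real" where
  "blomqvist_beta C = 4 * C (1/2) (1/2) - 1"

end

theory Submission
  imports Defs
begin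

text \<open>On the diagonal \<open>S\<^sub>\<delta>\<close> is \<open>\<delta>\<close> itself; on the antidiagonal it is
  \<open>x \<delta>(1-x)/(1-x)\<close> left of \<open>1/2\<close> and \<open>(1-x) \<delta>(x)/x = \<delta>(x)/x - \<delta>(x)\<close> right of it, so
  splitting at \<open>1/2\<close> yields the three formulas. For the bounds, the monotonicity of
  \<open>\<delta>(x)/x\<^sup>2\<close> together with \<open>\<delta>(1) = 1\<close> gives \<open>x\<^sup>2 \<le> \<delta>(x) \<le> x\<close>. All three formulas are
  monotone in \<open>\<delta>\<close>, and at the extreme diagonals \<open>x\<^sup>2\<close> (independence) and \<open>x\<close>
  (comonotonicity) they take the values \<open>0\<close> and \<open>1\<close>.\<close>

lemma integral_lebesgue_on_monomial:
  fixes a b c :: real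
  assumes "a \<le> b"
  shows "integral\<^sup>L (lebesgue_on {a..b}) (\<lambda>x. c * x ^ k) = c * (b ^ Suc k - a ^ Suc k) / Suc k"
proof -
  have "((\<lambda>x. c * x ^ Suc k / Suc k) has_real_derivative c * x ^ k) (at x)" for x
    using DERIV_cdivide[OF DERIV_cmult[OF DERIV_pow[of "Suc k" x]], of c "Suc k"] by simp
  then have "((\<lambda>x. c * x ^ k) has_integral (c * b ^ Suc k / Suc k - c * a ^ Suc k / Suc k)) {a..b}"
    by (intro fundamental_theorem_of_calculus[OF assms])
      (simp add: has_real_derivative_iff_has_vector_derivative[symmetric] has_field_derivative_at_within)
  moreover have "integrable (lebesgue_on {a..b}) (\<lambda>x. c * x ^ k)"
    by (intro continuous_imp_integrable_real continuous_intros)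
  then have "((\<lambda>x. c * x ^ k) has_integral integral\<^sup>L (lebesgue_on {a..b}) (\<lambda>x. c * x ^ k)) {a..b}"
    by (rule has_integral_integral_lebesgue_on) simp
  ultimately show ?thesis
    by (metis has_integral_unique diff_divide_distrib right_diff_distrib)
qed

lemma integral_lebesgue_on_mono_continuous:
  fixes f g :: "real \<Rightarrow> real"
  assumes "continuous_on {a..b} f" "continuous_on {a..b} g" "\<And>x. x \<in> {a..b} \<Longrightarrow> f x \<le> g x"
  shows "integral\<^sup>L (lebesgue_on {a..b}) f \<le> integral\<^sup>L (lebesgue_on {a..b}) g"
  using assms by (intro integral_mono continuous_imp_integrable_real) auto

lemma integral_lebesgue_on_split:
  fixes f g h :: "real \<Rightarrow> real"
  assumes "a \<le> c" "c \<le> b"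
    and g: "integrable (lebesgue_on {a..c}) g" and h: "integrable (lebesgue_on {c..b}) h"
    and fg: "\<And>x. x \<in> {a..c} \<Longrightarrow> f x = g x" and fh: "\<And>x. x \<in> {c..b} \<Longrightarrow> f x = h x"
  shows "integral\<^sup>L (lebesgue_on {a..b}) f
           = integral\<^sup>L (lebesgue_on {a..c}) g + integral\<^sup>L (lebesgue_on {c..b}) h"
proof -
  have "integrable (lebesgue_on {a..c}) f"
    using g by (subst Bochner_Integration.integrable_cong[OF refl]) (simp_all add: fg)
  moreover have "integrable (lebesgue_on {c..b}) f"
    using h by (subst Bochner_Integration.integrable_cong[OF refl]) (simp_all add: fh)
  ultimately have "integral\<^sup>L (lebesgue_on {a..b}) f
      = integral\<^sup>L (lebesgue_on {a..c}) f + integral\<^sup>L (lebesgue_on {c..b}) f"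
    using assms(1,2) by (metis integral_combine integrable_combine)
  also have "\<dots> = integral\<^sup>L (lebesgue_on {a..c}) g + integral\<^sup>L (lebesgue_on {c..b}) h"
    by (intro arg_cong2[where f = "(+)"] Bochner_Integration.integral_cong) (auto simp: fg fh)
  finally show ?thesis .
qed

lemma diag_class_le_self:
  fixes \<delta> :: "real \<Rightarrow> real"
  assumes "\<delta> \<in> diag_class" "x \<in> {0..1}"
  shows "\<delta> x \<le> x"
  using assms by (auto simp: diag_class_def)

lemma diag_class_continuous_on:
  fixes \<delta> :: "real \<Rightarrow> real"
  assumes "\<delta> \<in> diag_class"
  shows "continuous_on {0..1} \<delta>"
  using assms lipschitz_on_continuous_on by (auto simp: diag_class_def)

lemma diag_class_LSL_square_le:
  fixes \<delta> :: "real \<Rightarrow> real"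
  assumes "\<delta> \<in> diag_class_LSL" "x \<in> {0..1}"
  shows "x\<^sup>2 \<le> \<delta> x"
proof (cases "x = 0")
  case True
  then show ?thesis
    using assms by (auto simp: diag_class_LSL_def diag_class_def)
next
  case False
  with assms(2) have "x > 0" by simp
  have anti: "antimono_on {0<..1} (\<lambda>x. \<delta> x / x\<^sup>2)" and "\<delta> 1 = 1"
    using assms(1) by (simp_all add: diag_class_LSL_def diag_class_def)
  then have "1 \<le> \<delta> x / x\<^sup>2"
    using monotone_onD[OF anti, of x 1] assms(2) \<open>x > 0\<close> by simp
  then show ?thesis
    using \<open>x > 0\<close> by (simp add: field_simps)
qed

lemma continuous_on_reflected_ratio:
  fixes \<delta> :: "real \<Rightarrow> real"
  assumes "continuous_on {0..1} \<delta>"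
  shows "continuous_on {0..1/2} (\<lambda>x. x * \<delta> (1 - x) / (1 - x))"
proof -
  have "continuous_on {0..1/2} (\<lambda>x. \<delta> (1 - x))"
    by (rule continuous_on_compose2[OF assms]) (auto intro!: continuous_intros)
  then show ?thesis
    by (auto intro!: continuous_intros)
qed

lemma continuous_on_ratio:
  fixes \<delta> :: "real \<Rightarrow> real"
  assumes "continuous_on {0..1} \<delta>"
  shows "continuous_on {1/2..1} (\<lambda>x. \<delta> x / x)"
  using continuous_on_subset[OF assms] by (auto intro!: continuous_intros)

lemma S_delta_diagonal:
  fixes \<delta> :: "real \<Rightarrow> real"
  assumes "\<delta> 0 = 0"
  shows "S_delta \<delta> x x = \<delta> x"
  using assms by (simp add: S_delta_def)

lemma S_delta_antidiagonal_left:
  fixes \<delta> :: "real \<Rightarrow> real"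
  assumes "x \<le> 1/2"
  shows "S_delta \<delta> x (1 - x) = x * \<delta> (1 - x) / (1 - x)"
proof (cases "x = 1/2")
  case True
  show ?thesis
    unfolding True by (simp add: S_delta_def)
next
  case False
  with assms show ?thesis by (simp add: S_delta_def)
qed

lemma S_delta_antidiagonal_right:
  fixes \<delta> :: "real \<Rightarrow> real"
  assumes "1/2 \<le> x"
  shows "S_delta \<delta> x (1 - x) = (1 - x) * \<delta> x / x"
  using assms by (simp add: S_delta_def)

lemma blomqvist_beta_S_delta: "blomqvist_beta (S_delta \<delta>) = 4 * \<delta> (1/2) - 1"
  by (simp add: blomqvist_beta_def S_delta_def)

lemma spearman_footrule_S_delta:
  fixes \<delta> :: "real \<Rightarrow> real"
  assumes "\<delta> 0 = 0"
  shows "spearman_footrule (S_delta \<delta>) = 6 * integral\<^sup>L (lebesgue_on {0..1}) \<delta> - 2"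
  using assms by (simp add: spearman_footrule_def S_delta_diagonal)

lemma gini_gamma_S_delta:
  fixes \<delta> :: "real \<Rightarrow> real"
  assumes "\<delta> 0 = 0" and cont: "continuous_on {0..1} \<delta>"
  shows "gini_gamma (S_delta \<delta>) =
           4 * integral\<^sup>L (lebesgue_on {0..1/2}) (\<lambda>x. \<delta> x + x * \<delta> (1 - x) / (1 - x))
         + 4 * integral\<^sup>L (lebesgue_on {1/2..1}) (\<lambda>x. \<delta> x / x) - 2"
proof -
  let ?I = "\<lambda>a b f. integral\<^sup>L (lebesgue_on {a..b::real}) f"
  define g where "g x = x * \<delta> (1 - x) / (1 - x)" for x
  have int_\<delta>: "integrable (lebesgue_on {a..b}) \<delta>" if "{a..b} \<subseteq> {0..1}" for a b
    using that by (intro continuous_imp_integrable_real continuous_on_subset[OF cont])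
  have int_g: "integrable (lebesgue_on {0..1/2}) g"
    unfolding g_def by (intro continuous_imp_integrable_real continuous_on_reflected_ratio cont)
  have int_ratio: "integrable (lebesgue_on {1/2..1}) (\<lambda>x. \<delta> x / x)"
    by (intro continuous_imp_integrable_real continuous_on_ratio cont)
  have "?I 0 1 (\<lambda>x. S_delta \<delta> x x) = ?I 0 (1/2) \<delta> + ?I (1/2) 1 \<delta>"
    using int_\<delta> by (simp add: S_delta_diagonal \<open>\<delta> 0 = 0\<close> integral_combine)
  moreover have "?I 0 1 (\<lambda>x. S_delta \<delta> x (1 - x)) = ?I 0 (1/2) g + ?I (1/2) 1 (\<lambda>x. \<delta> x / x - \<delta> x)"
    using int_g int_ratio int_\<delta>
    by (intro integral_lebesgue_on_split)
      (auto simp: g_def S_delta_antidiagonal_left S_delta_antidiagonal_right field_simps)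
  moreover have "?I (1/2) 1 (\<lambda>x. \<delta> x / x - \<delta> x) = ?I (1/2) 1 (\<lambda>x. \<delta> x / x) - ?I (1/2) 1 \<delta>"
    using int_ratio int_\<delta> by (simp add: Bochner_Integration.integral_diff)
  moreover have "?I 0 (1/2) (\<lambda>x. \<delta> x + g x) = ?I 0 (1/2) \<delta> + ?I 0 (1/2) g"
    using int_g int_\<delta> by (simp add: Bochner_Integration.integral_add)
  ultimately show ?thesis
    by (simp add: gini_gamma_def g_def)
qed

lemma blomqvist_beta_S_delta_bounds:
  fixes \<delta> :: "real \<Rightarrow> real"
  assumes lower: "\<And>x. x \<in> {0..1} \<Longrightarrow> x\<^sup>2 \<le> \<delta> x" and upper: "\<And>x. x \<in> {0..1} \<Longrightarrow> \<delta> x \<le> x"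
  shows "blomqvist_beta (S_delta \<delta>) \<in> {0..1}"
  using lower[of "1/2"] upper[of "1/2"] by (simp add: blomqvist_beta_S_delta power2_eq_square)

lemma spearman_footrule_S_delta_bounds:
  fixes \<delta> :: "real \<Rightarrow> real"
  assumes cont: "continuous_on {0..1} \<delta>"
    and lower: "\<And>x. x \<in> {0..1} \<Longrightarrow> x\<^sup>2 \<le> \<delta> x" and upper: "\<And>x. x \<in> {0..1} \<Longrightarrow> \<delta> x \<le> x"
  shows "spearman_footrule (S_delta \<delta>) \<in> {0..1}"
proof -
  have "\<delta> 0 = 0"
    using lower[of 0] upper[of 0] by simp
  have "integral\<^sup>L (lebesgue_on {0..1}) (\<lambda>x. x\<^sup>2) \<le> integral\<^sup>L (lebesgue_on {0..1}) \<delta>"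
    using lower by (intro integral_lebesgue_on_mono_continuous cont continuous_intros)
  moreover have "integral\<^sup>L (lebesgue_on {0..1}) \<delta> \<le> integral\<^sup>L (lebesgue_on {0..1}) (\<lambda>x. x)"
    using upper by (intro integral_lebesgue_on_mono_continuous cont continuous_intros)
  moreover have "integral\<^sup>L (lebesgue_on {0..1::real}) (\<lambda>x. x\<^sup>2) = 1/3"
    using integral_lebesgue_on_monomial[of 0 1 1 2] by simp
  moreover have "integral\<^sup>L (lebesgue_on {0..1::real}) (\<lambda>x. x) = 1/2"
    using integral_lebesgue_on_monomial[of 0 1 1 1] by simp
  ultimately show ?thesis
    by (simp add: spearman_footrule_S_delta[of \<delta>, OF \<open>\<delta> 0 = 0\<close>])
qed

lemma gini_gamma_S_delta_bounds:
  fixes \<delta> :: "real \<Rightarrow> real"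
  assumes cont: "continuous_on {0..1} \<delta>"
    and lower: "\<And>x. x \<in> {0..1} \<Longrightarrow> x\<^sup>2 \<le> \<delta> x" and upper: "\<And>x. x \<in> {0..1} \<Longrightarrow> \<delta> x \<le> x"
  shows "gini_gamma (S_delta \<delta>) \<in> {0..1}"
proof -
  let ?I = "\<lambda>a b f. integral\<^sup>L (lebesgue_on {a..b::real}) f"
  define f where "f = (\<lambda>x. \<delta> x + x * \<delta> (1 - x) / (1 - x))"
  have "\<delta> 0 = 0"
    using lower[of 0] upper[of 0] by simp
  have cont_f: "continuous_on {0..1/2} f"
    unfolding f_def using continuous_on_subset[OF cont]
    by (intro continuous_intros continuous_on_reflected_ratio cont) auto
  have f_bounds: "x \<le> f x \<and> f x \<le> 2 * x" if "x \<in> {0..1/2}" for x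
  proof -
    have "1 - x \<le> \<delta> (1 - x) / (1 - x)" "\<delta> (1 - x) / (1 - x) \<le> 1"
      using that lower[of "1 - x"] upper[of "1 - x"] by (auto simp: field_simps power2_eq_square)
    then have "x * (1 - x) \<le> x * (\<delta> (1 - x) / (1 - x))" "x * (\<delta> (1 - x) / (1 - x)) \<le> x * 1"
      using that by (metis mult_left_mono atLeastAtMost_iff)+
    then show ?thesis
      using that lower[of x] upper[of x] by (simp add: f_def power2_eq_square algebra_simps)
  qed
  have ratio_bounds: "x \<le> \<delta> x / x \<and> \<delta> x / x \<le> 1" if "x \<in> {1/2..1}" for x
    using that lower[of x] upper[of x] by (simp add: field_simps power2_eq_square)
  have "?I 0 (1/2) (\<lambda>x. x) \<le> ?I 0 (1/2) f"
    using f_bounds by (intro integral_lebesgue_on_mono_continuous cont_f continuous_intros) auto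
  moreover have "?I 0 (1/2) f \<le> ?I 0 (1/2) (\<lambda>x. 2 * x)"
    using f_bounds by (intro integral_lebesgue_on_mono_continuous cont_f continuous_intros) auto
  moreover have "?I (1/2) 1 (\<lambda>x. x) \<le> ?I (1/2) 1 (\<lambda>x. \<delta> x / x)"
    using ratio_bounds
    by (intro integral_lebesgue_on_mono_continuous continuous_on_ratio cont continuous_intros) auto
  moreover have "?I (1/2) 1 (\<lambda>x. \<delta> x / x) \<le> ?I (1/2) 1 (\<lambda>x. 1::real)"
    using ratio_bounds
    by (intro integral_lebesgue_on_mono_continuous continuous_on_ratio cont continuous_intros) auto
  moreover have "?I 0 (1/2) (\<lambda>x. x) = 1/8" "?I 0 (1/2) (\<lambda>x. 2 * x) = 1/4"
    "?I (1/2) 1 (\<lambda>x. x) = 3/8" "?I (1/2) 1 (\<lambda>x. 1::real) = 1/2"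
    using integral_lebesgue_on_monomial[of 0 "1/2" 1 1] integral_lebesgue_on_monomial[of 0 "1/2" 2 1]
      integral_lebesgue_on_monomial[of "1/2" 1 1 1] integral_lebesgue_on_monomial[of "1/2" 1 1 0]
    by simp_all
  moreover have "gini_gamma (S_delta \<delta>) = 4 * ?I 0 (1/2) f + 4 * ?I (1/2) 1 (\<lambda>x. \<delta> x / x) - 2"
    unfolding f_def by (rule gini_gamma_S_delta[OF \<open>\<delta> 0 = 0\<close> cont])
  ultimately show ?thesis
    by simp
qed

theorem mainTheorem12:
  fixes \<delta> :: "real \<Rightarrow> real"
  assumes "\<delta> \<in> diag_class_LSL"
  shows "gini_gamma (S_delta \<delta>) =
           4 * integral\<^sup>L (lebesgue_on {0..1/2}) (\<lambda>x. \<delta> x + x * \<delta> (1 - x) / (1 - x))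
         + 4 * integral\<^sup>L (lebesgue_on {1/2..1}) (\<lambda>x. \<delta> x / x) - 2
       \<and> spearman_footrule (S_delta \<delta>) = 6 * integral\<^sup>L (lebesgue_on {0..1}) \<delta> - 2
       \<and> blomqvist_beta (S_delta \<delta>) = 4 * \<delta> (1/2) - 1
       \<and> gini_gamma (S_delta \<delta>) \<in> {0..1}
       \<and> spearman_footrule (S_delta \<delta>) \<in> {0..1}
       \<and> blomqvist_beta (S_delta \<delta>) \<in> {0..1}"
proof -
  have \<delta>: "\<delta> \<in> diag_class"
    using assms by (simp add: diag_class_LSL_def)
  have cont: "continuous_on {0..1} \<delta>"
    using diag_class_continuous_on[OF \<delta>] .
  have lower: "\<And>x. x \<in> {0..1} \<Longrightarrow> x\<^sup>2 \<le> \<delta> x"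
    using diag_class_LSL_square_le[OF assms] .
  have upper: "\<And>x. x \<in> {0..1} \<Longrightarrow> \<delta> x \<le> x"
    using diag_class_le_self[OF \<delta>] .
  have "\<delta> 0 = 0"
    using lower[of 0] upper[of 0] by simp
  show ?thesis
    using gini_gamma_S_delta[OF \<open>\<delta> 0 = 0\<close> cont] spearman_footrule_S_delta[of \<delta>, OF \<open>\<delta> 0 = 0\<close>]
      blomqvist_beta_S_delta blomqvist_beta_S_delta_bounds[OF lower upper]
      spearman_footrule_S_delta_bounds[OF cont lower upper]
      gini_gamma_S_delta_bounds[OF cont lower upper]
    by simp
qed

end
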